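(* Suppose there is $a\in\{0,1\}$, with $\neg a=1-a$, such that both of the following hold: (1) $E\{Z_i\mid A_i=a,Y_i=1\}<E\{Z_i\mid A_i=\neg a,Y_i=1\}$; (2) $E\{R_i\mid A_i=a,Y_i=1\}>E\{R_i\mid A_i=\neg a,Y_i=1\}$. Then there exists $\epsilon_o>0$ such that $\gamma(\epsilon_o)=0$, i.e. the exponential mechanism $\mathscr{A}_{\epsilon_o}$ is perfectly fair.
   Context: There are $n$ individuals indexed by $\mathcal{N}=\{1,\dots,n\}$. Individual $i$ is described by a random tuple $(X_i,A_i,Y_i)$, where $X_i\in\mathcal{X}$ are observable features, $A_i\in\{0,1\}$ is a protected attribute and $Y_i\in\{0,1\}$ is a hidden qualification state; the tuples $(X_i,A_i,Y_i)$, $i=1,\dots,n$, are i.i.d. with a common distribution $\mathsf{F}$ ($X_i$ may be correlated with $A_i$). A fixed function $r:\mathcal{X}\to\mathcal{R}$ is given, where $\mathcal{R}=\{\rho_1,\dots,\rho_{n'}\}\subset[0,1]$ is finite with $\rho_1=0$, $\rho_{n'}=1$; the qualification score of $i$ is $R_i=r(X_i)$. Conditioning events of the form $\{A_i=a,Y_i=1\}$ are assumed to have positive probability. For $\epsilon\ge 0$, the exponential mechanism $\mathscr{A}_\epsilon$, given realized scores $(r_1,\dots,r_n)$, selects individual $i$ with probability $\exp(\epsilon r_i/2)/\sum_{j=1}^n\exp(\epsilon r_j/2)$. Define the random variable $Z_{i,\epsilon}=\exp(\epsilon R_i/2)/\sum_{j=1}^n\exp(\epsilon R_j/2)$ (so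 $E\{Z_{i,\epsilon}\}$ is the probability that $\mathscr{A}_\epsilon$ selects $i$), and the fairness gap $\gamma(\epsilon)=E\{Z_{i,\epsilon}\mid A_i=0,Y_i=1\}-E\{Z_{i,\epsilon}\mid A_i=1,Y_i=1\}$ (independent of $i$). The mechanism is called perfectly fair when $\gamma(\epsilon)=0$. Let $N_{\max}=|\{i\in\mathcal{N}: R_i=\max_j R_j\}|$ and define $Z_i=0$ if $R_i\ne\max_j R_j$ and $Z_i=1/N_{\max}$ otherwise; $E\{Z_i\}$ is the probability that the non-private algorithm $\mathscr{A}$, which selects uniformly at random among the individuals with the highest score, selects $i$. *)

theory Defs
  imports "HOL-Probability.Probability"
begin

text \<open>An outcome of the population is a function assigning to each individual
  i in {1..n} its tuple (X_i, A_i, Y_i); A_i and Y_i are encoded as booleans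
  (True = 1, False = 0).\<close>

definition population :: "('x \<times> bool \<times> bool) measure \<Rightarrow> nat \<Rightarrow> (nat \<Rightarrow> 'x \<times> bool \<times> bool) measure" where
  "population F n = PiM {1..n} (\<lambda>_. F)"

definition score :: "('x \<Rightarrow> real) \<Rightarrow> nat \<Rightarrow> (nat \<Rightarrow> 'x \<times> bool \<times> bool) \<Rightarrow> real" where
  "score r i \<omega> = r (fst (\<omega> i))"

definition expmech_Z :: "('x \<Rightarrow> real) \<Rightarrow> nat \<Rightarrow> real \<Rightarrow> nat \<Rightarrow> (nat \<Rightarrow> 'x \<times> bool \<times> bool) \<Rightarrow> real" where
  "expmech_Z r n \<epsilon> i \<omega> =
     exp (\<epsilon> * score r i \<omega> / 2) / (\<Sum>j\<in>{1..n}. exp (\<epsilon> * score r j \<omega> / 2))"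

text \<open>Z_i: selection probability of i under the non-private algorithm.\<close>
definition maxscore_Z :: "('x \<Rightarrow> real) \<Rightarrow> nat \<Rightarrow> nat \<Rightarrow> (nat \<Rightarrow> 'x \<times> bool \<times> bool) \<Rightarrow> real" where
  "maxscore_Z r n i \<omega> =
     (let m = Max ((\<lambda>j. score r j \<omega>) ` {1..n});
          Nmax = card {j \<in> {1..n}. score r j \<omega> = m}
      in if score r i \<omega> = m then 1 / real Nmax else 0)"

definition group_event :: "(nat \<Rightarrow> 'x \<times> bool \<times> bool) measure \<Rightarrow> nat \<Rightarrow> bool \<Rightarrow> (nat \<Rightarrow> 'x \<times> bool \<times> bool) set" where
  "group_event M i a = {\<omega> \<in> space M. fst (snd (\<omega> i)) = a \<and> snd (snd (\<omega> i))}"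

definition cexp_event :: "'a measure \<Rightarrow> ('a \<Rightarrow> real) \<Rightarrow> 'a set \<Rightarrow> real" where
  "cexp_event M W B = (\<integral>\<omega>. indicator B \<omega> * W \<omega> \<partial>M) / measure M B"

definition fairness_gap :: "('x \<times> bool \<times> bool) measure \<Rightarrow> ('x \<Rightarrow> real) \<Rightarrow> nat \<Rightarrow> nat \<Rightarrow> real \<Rightarrow> real" where
  "fairness_gap F r n i \<epsilon> =
     (let M = population F n in
      cexp_event M (expmech_Z r n \<epsilon> i) (group_event M i False)
      - cexp_event M (expmech_Z r n \<epsilon> i) (group_event M i True))"

end

(* The fairness gap gamma is continuous (even 1-Lipschitz), since the selection probability of the
   exponential mechanism is 1/2-Lipschitz in epsilon when all scores lie in [0,1].  As epsilon grows,
   the exponential mechanism converges pointwise to the non-private algorithm, so by dominated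
   convergence gamma(epsilon) tends to the gap of the Z_i, whose sign is given by (1).  Near 0,
   gamma(epsilon)/epsilon tends to (1 - 1/n)/(2n) times the gap of the R_i: by independence, the
   scores of the other individuals have the same conditional mean in both groups and cancel.  By (2)
   this has the opposite sign, and (1) forces n >= 2, so gamma changes sign on (0, oo). *)

theory Submission
  imports Defs "HOL-Real_Asymp.Real_Asymp"
begin

lemma pos_root_of_opposite_signs_at_zero_and_infinity:
  fixes f :: "real \<Rightarrow> real"
  assumes "continuous_on {0<..} f"
    and "((\<lambda>x. f x / x) \<longlongrightarrow> l) (at_right 0)" and "(f \<longlongrightarrow> L) at_top"
    and "l * L < 0"
  shows "\<exists>x>0. f x = 0"
proof -
  have "l * l > 0" "L * L > 0"
    using assms(4) by (auto simp: zero_less_mult_iff mult_less_0_iff)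
  have "\<forall>\<^sub>F x in at_right 0. f x / x * l > 0 \<and> x > 0"
    using order_tendstoD(1)[OF tendsto_mult_right[OF assms(2)] \<open>l * l > 0\<close>]
    by (intro eventually_conj eventually_at_right_less)
  then obtain a where "f a / a * l > 0" "a > 0"
    using eventually_happens'[OF trivial_limit_at_right_real] by blast
  then have "f a * l > 0"
    by (simp add: zero_less_mult_iff zero_less_divide_iff)
  have "\<forall>\<^sub>F x in at_top. f x * L > 0 \<and> x \<ge> a"
    using order_tendstoD(1)[OF tendsto_mult_right[OF assms(3)] \<open>L * L > 0\<close>]
    by (intro eventually_conj eventually_ge_at_top)
  then obtain b where "f b * L > 0" "b \<ge> a"
    using eventually_happens'[OF trivial_limit_at_top_linorder] by blast
  have "continuous_on {a..b} f"
    using \<open>a > 0\<close> by (intro continuous_on_subset[OF assms(1)]) auto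
  moreover have "f a * f b < 0"
  proof -
    have "(f a * l) * (f b * L) > 0"
      using \<open>f a * l > 0\<close> \<open>f b * L > 0\<close> by simp
    then have "(f a * f b) * (l * L) > 0"
      by (simp add: ac_simps)
    then show ?thesis
      using assms(4) zero_less_mult_iff[of "f a * f b" "l * L"] by linarith
  qed
  ultimately have "\<exists>x. a \<le> x \<and> x \<le> b \<and> f x = 0"
    using \<open>b \<ge> a\<close> IVT'[of f a 0 b] IVT2'[of f b 0 a] by (auto simp: mult_less_0_iff)
  then obtain x where "a \<le> x" "f x = 0"
    by blast
  then show ?thesis
    using \<open>a > 0\<close> by (intro exI[of _ x]) auto
qed

definition expmech_prob :: "'a set \<Rightarrow> ('a \<Rightarrow> real) \<Rightarrow> real \<Rightarrow> 'a \<Rightarrow> real" where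
  "expmech_prob I x \<epsilon> i = exp (\<epsilon> * x i / 2) / (\<Sum>j\<in>I. exp (\<epsilon> * x j / 2))"

lemma expmech_prob_nonneg: "0 \<le> expmech_prob I x \<epsilon> i"
  unfolding expmech_prob_def by (simp add: sum_nonneg)

lemma sum_expmech_prob:
  assumes "finite I" "I \<noteq> {}"
  shows "(\<Sum>i\<in>I. expmech_prob I x \<epsilon> i) = 1"
proof -
  have "(\<Sum>j\<in>I. exp (\<epsilon> * x j / 2)) > 0" using assms by (intro sum_pos) auto
  then show ?thesis unfolding expmech_prob_def sum_divide_distrib[symmetric] by simp
qed

lemma expmech_prob_le_one:
  assumes "finite I" "i \<in> I"
  shows "expmech_prob I x \<epsilon> i \<le> 1"
proof -
  have "expmech_prob I x \<epsilon> i \<le> (\<Sum>j\<in>I. expmech_prob I x \<epsilon> j)"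
    using assms by (intro member_le_sum) (auto simp: expmech_prob_nonneg)
  also have "\<dots> = 1"
    using assms by (intro sum_expmech_prob) auto
  finally show ?thesis .
qed

lemma expmech_prob_zero: "expmech_prob I x 0 i = 1 / card I"
  unfolding expmech_prob_def by simp

lemma expmech_prob_has_real_derivative:
  assumes "finite I" "i \<in> I"
  shows "((\<lambda>\<epsilon>. expmech_prob I x \<epsilon> i) has_real_derivative
           expmech_prob I x \<epsilon> i * (x i - (\<Sum>j\<in>I. x j * expmech_prob I x \<epsilon> j)) / 2) (at \<epsilon>)"
proof -
  define S where "S = (\<Sum>j\<in>I. exp (\<epsilon> * x j / 2))"
  have "S > 0" unfolding S_def using assms by (intro sum_pos) auto
  have "((\<lambda>\<epsilon>. expmech_prob I x \<epsilon> i) has_real_derivative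
      (exp (\<epsilon> * x i / 2) * (x i / 2) * S - exp (\<epsilon> * x i / 2) * (\<Sum>j\<in>I. exp (\<epsilon> * x j / 2) * (x j / 2))) / (S * S)) (at \<epsilon>)"
    unfolding expmech_prob_def[abs_def] S_def using \<open>S > 0\<close>[unfolded S_def]
    by (auto intro!: derivative_eq_intros)
  moreover have "(\<Sum>j\<in>I. x j * expmech_prob I x \<epsilon> j) = (\<Sum>j\<in>I. exp (\<epsilon> * x j / 2) * x j) / S"
    unfolding expmech_prob_def S_def[symmetric] sum_divide_distrib by (simp add: mult.commute)
  ultimately show ?thesis
    using \<open>S > 0\<close> by (simp add: expmech_prob_def S_def[symmetric] sum_divide_distrib[symmetric]
        sum_distrib_left field_simps)
qed

lemma expmech_prob_lipschitz:
  assumes "finite I" "i \<in> I" "\<And>j. j \<in> I \<Longrightarrow> x j \<in> {0..1}"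
  shows "\<bar>expmech_prob I x \<epsilon> i - expmech_prob I x \<epsilon>' i\<bar> \<le> \<bar>\<epsilon> - \<epsilon>'\<bar> / 2"
proof -
  have bound: "\<bar>expmech_prob I x e i * (x i - (\<Sum>j\<in>I. x j * expmech_prob I x e j)) / 2\<bar> \<le> 1 / 2" for e
  proof -
    have "(\<Sum>j\<in>I. x j * expmech_prob I x e j) \<le> (\<Sum>j\<in>I. expmech_prob I x e j)"
      using assms(3) by (intro sum_mono) (auto intro: mult_left_le_one_le expmech_prob_nonneg)
    moreover have "(\<Sum>j\<in>I. x j * expmech_prob I x e j) \<ge> 0"
      using assms(3) by (intro sum_nonneg) (auto simp: expmech_prob_nonneg)
    ultimately have "\<bar>x i - (\<Sum>j\<in>I. x j * expmech_prob I x e j)\<bar> \<le> 1"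
      using assms sum_expmech_prob[of I x e] by fastforce
    moreover have "\<bar>expmech_prob I x e i\<bar> \<le> 1"
      using assms expmech_prob_le_one[of I i x e] expmech_prob_nonneg[of I x e i] by simp
    ultimately show ?thesis
      by (simp add: abs_mult mult_le_one)
  qed
  have "norm (expmech_prob I x \<epsilon> i - expmech_prob I x \<epsilon>' i) \<le> 1 / 2 * norm (\<epsilon> - \<epsilon>')"
    by (rule field_differentiable_bound[OF convex_UNIV _ bound[unfolded real_norm_def[symmetric]]])
      (auto intro: expmech_prob_has_real_derivative[OF assms(1,2), THEN has_field_derivative_at_within])
  then show ?thesis by simp
qed

lemma expmech_prob_slope_at_zero:
  assumes "finite I" "i \<in> I"
  shows "((\<lambda>\<epsilon>. (expmech_prob I x \<epsilon> i - 1 / card I) / \<epsilon>)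
           \<longlongrightarrow> (x i - (\<Sum>j\<in>I. x j) / card I) / (2 * card I)) (at 0)"
proof -
  have "((\<lambda>\<epsilon>. expmech_prob I x \<epsilon> i) has_real_derivative (x i - (\<Sum>j\<in>I. x j) / card I) / (2 * card I)) (at 0)"
    using expmech_prob_has_real_derivative[OF assms, of x 0]
    by (simp add: expmech_prob_zero sum_divide_distrib mult.commute)
  then show ?thesis
    by (simp add: has_field_derivative_iff expmech_prob_zero)
qed

lemma exp_scaled_tendsto_at_top:
  fixes c :: real
  assumes "c \<le> 0"
  shows "((\<lambda>\<epsilon>. exp (\<epsilon> * c / 2)) \<longlongrightarrow> (if c = 0 then 1 else 0)) at_top"
  using assms by (cases "c = 0") (simp, real_asymp)

lemma expmech_prob_tendsto_at_top:
  fixes x :: "'a \<Rightarrow> real"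
  assumes "finite I" "i \<in> I"
  defines "m \<equiv> Max (x ` I)"
  shows "((\<lambda>\<epsilon>. expmech_prob I x \<epsilon> i) \<longlongrightarrow> (if x i = m then 1 / card {j \<in> I. x j = m} else 0)) at_top"
proof -
  have le_m: "x j \<le> m" if "j \<in> I" for j
    unfolding m_def using assms(1) that by auto
  have "m \<in> x ` I"
    unfolding m_def using assms by (intro Max_in) auto
  then have "card {j \<in> I. x j = m} > 0"
    using assms(1) by (auto simp: card_gt_0_iff)
  have shifted: "expmech_prob I x \<epsilon> i = exp (\<epsilon> * (x i - m) / 2) / (\<Sum>j\<in>I. exp (\<epsilon> * (x j - m) / 2))" for \<epsilon>
    by (simp add: expmech_prob_def right_diff_distrib diff_divide_distrib exp_diff sum_divide_distrib[symmetric])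
  have term_lim: "((\<lambda>\<epsilon>. exp (\<epsilon> * (x j - m) / 2)) \<longlongrightarrow> (if x j = m then 1 else 0)) at_top" if "j \<in> I" for j
    using exp_scaled_tendsto_at_top[of "x j - m"] le_m[OF that] by simp
  have "(\<Sum>j\<in>I. if x j = m then 1 else 0) = real (card {j \<in> I. x j = m})"
    using assms(1) by (simp add: sum.If_cases Int_def conj_commute)
  then have "((\<lambda>\<epsilon>. \<Sum>j\<in>I. exp (\<epsilon> * (x j - m) / 2)) \<longlongrightarrow> real (card {j \<in> I. x j = m})) at_top"
    using tendsto_sum[of I "\<lambda>j \<epsilon>. exp (\<epsilon> * (x j - m) / 2)", OF term_lim] by simp
  then have "((\<lambda>\<epsilon>. expmech_prob I x \<epsilon> i) \<longlongrightarrow> (if x i = m then 1 else 0) / card {j \<in> I. x j = m}) at_top"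
    unfolding shifted using \<open>card {j \<in> I. x j = m} > 0\<close> by (intro tendsto_divide term_lim assms) auto
  then show ?thesis by (simp split: if_splits)
qed

lemma cexp_event_cdiv: "cexp_event M (\<lambda>\<omega>. W \<omega> / c) B = cexp_event M W B / c"
  unfolding cexp_event_def by (simp add: times_divide_eq_right)

lemma cexp_event_diff:
  assumes "B \<in> sets M" "integrable M W" "integrable M V"
  shows "cexp_event M (\<lambda>\<omega>. W \<omega> - V \<omega>) B = cexp_event M W B - cexp_event M V B"
  using assms unfolding cexp_event_def
  by (simp add: right_diff_distrib diff_divide_distrib integrable_real_mult_indicator mult.commute[of "indicator B _"])

lemma cexp_event_sum:
  assumes "B \<in> sets M" "\<And>k. k \<in> K \<Longrightarrow> integrable M (W k)"
  shows "cexp_event M (\<lambda>\<omega>. \<Sum>k\<in>K. W k \<omega>) B = (\<Sum>k\<in>K. cexp_event M (W k) B)"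
  using assms unfolding cexp_event_def
  by (simp add: sum_distrib_left sum_divide_distrib integrable_real_mult_indicator mult.commute[of "indicator B _"])

context finite_measure
begin

lemma cexp_event_const:
  assumes "B \<in> sets M" "measure M B \<noteq> 0"
  shows "cexp_event M (\<lambda>_. c) B = c"
  using assms unfolding cexp_event_def by simp

lemma abs_cexp_event_le:
  assumes "B \<in> sets M" "measure M B > 0" "W \<in> borel_measurable M"
    and "\<And>\<omega>. \<omega> \<in> space M \<Longrightarrow> \<bar>W \<omega>\<bar> \<le> C"
  shows "\<bar>cexp_event M W B\<bar> \<le> C"
proof -
  have "integrable M (\<lambda>\<omega>. indicator B \<omega> * C)"
    using assms(1) by (simp add: less_top[symmetric])
  moreover have "integrable M (\<lambda>\<omega>. indicator B \<omega> * W \<omega>)"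
    using assms by (intro integrable_const_bound[where B = "\<bar>C\<bar>"] AE_I2 borel_measurable_times)
      (force simp: abs_mult indicator_def)+
  ultimately have "\<bar>\<integral>\<omega>. indicator B \<omega> * W \<omega> \<partial>M\<bar> \<le> (\<integral>\<omega>. indicator B \<omega> * C \<partial>M)"
    using assms(4) by (intro order_trans[OF integral_abs_bound] integral_mono integrable_abs)
      (auto simp: indicator_def)
  also have "\<dots> = C * measure M B"
    using assms(1) by simp
  finally show ?thesis
    using assms(2) unfolding cexp_event_def by (simp add: abs_div divide_le_eq)
qed

lemma cexp_event_tendsto_at_top:
  fixes s :: "real \<Rightarrow> 'a \<Rightarrow> real"
  assumes "B \<in> sets M" "W \<in> borel_measurable M" "\<And>t. s t \<in> borel_measurable M"
    and "\<And>\<omega>. \<omega> \<in> space M \<Longrightarrow> ((\<lambda>t. s t \<omega>) \<longlongrightarrow> W \<omega>) at_top"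
    and "\<And>t \<omega>. \<omega> \<in> space M \<Longrightarrow> \<bar>s t \<omega>\<bar> \<le> C"
  shows "((\<lambda>t. cexp_event M (s t) B) \<longlongrightarrow> cexp_event M W B) at_top"
proof -
  have "((\<lambda>t. \<integral>\<omega>. indicator B \<omega> * s t \<omega> \<partial>M) \<longlongrightarrow> (\<integral>\<omega>. indicator B \<omega> * W \<omega> \<partial>M)) at_top"
  proof (rule integral_dominated_convergence_at_top[where w = "\<lambda>_. \<bar>C\<bar>"])
    show "AE \<omega> in M. ((\<lambda>t. indicator B \<omega> * s t \<omega>) \<longlongrightarrow> indicator B \<omega> * W \<omega>) at_top"
      using assms(4) by (intro AE_I2 tendsto_mult_left)
    have "norm (indicator B \<omega> * s t \<omega>) \<le> \<bar>C\<bar>" if "\<omega> \<in> space M" for t \<omega>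
      using assms(5)[OF that, of t] by (cases "\<omega> \<in> B") auto
    then have "AE \<omega> in M. norm (indicator B \<omega> * s t \<omega>) \<le> \<bar>C\<bar>" for t
      by (intro AE_I2)
    then show "\<forall>\<^sub>F t in at_top. AE \<omega> in M. norm (indicator B \<omega> * s t \<omega>) \<le> \<bar>C\<bar>"
      by (simp add: always_eventually)
  qed (use assms in auto)
  then show ?thesis
    unfolding cexp_event_def by (simp add: divide_inverse tendsto_mult_right)
qed

end

lemma (in product_prob_space) measure_PiM_Collect_single:
  assumes "i \<in> I" "A \<in> sets (M i)"
  shows "measure (Pi\<^sub>M I M) {\<omega> \<in> space (Pi\<^sub>M I M). \<omega> i \<in> A} = measure (M i) A"
  using emeasure_PiM_Collect_single[OF assms] by (simp add: measure_def)

lemma (in product_prob_space) integral_PiM_two_components: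
  fixes f g :: "'a \<Rightarrow> real"
  assumes "finite I" "i \<in> I" "j \<in> I" "i \<noteq> j" "integrable (M i) f" "integrable (M j) g"
  shows "(\<integral>\<omega>. f (\<omega> i) * g (\<omega> j) \<partial>Pi\<^sub>M I M) = (\<integral>x. f x \<partial>M i) * (\<integral>x. g x \<partial>M j)"
proof -
  define h where "h k x = (if k = i then f x else 1) * (if k = j then g x else 1)" for k x
  have "integrable (M k) (h k)" for k
    unfolding h_def using assms by (cases "k = i"; cases "k = j") auto
  then have "(\<integral>\<omega>. (\<Prod>k\<in>I. h k (\<omega> k)) \<partial>Pi\<^sub>M I M) = (\<Prod>k\<in>I. integral\<^sup>L (M k) (h k))"
    using assms(1) by (intro product_integral_prod)
  moreover have "(\<Prod>k\<in>I. h k (\<omega> k)) = f (\<omega> i) * g (\<omega> j)" for \<omega>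
    unfolding h_def prod.distrib using assms by (simp add: prod.delta)
  moreover have "integral\<^sup>L (M k) (h k) = (if k = i then integral\<^sup>L (M i) f else 1) * (if k = j then integral\<^sup>L (M j) g else 1)" for k
    unfolding h_def using assms(4) by (auto simp: M.prob_space)
  ultimately show ?thesis
    using assms by (simp add: prod.distrib prod.delta)
qed

lemma expmech_Z_eq_expmech_prob:
  "expmech_Z r n \<epsilon> i \<omega> = expmech_prob {1..n} (\<lambda>j. score r j \<omega>) \<epsilon> i"
  unfolding expmech_Z_def expmech_prob_def ..

lemma expmech_Z_tendsto_maxscore_Z:
  assumes "i \<in> {1..n}"
  shows "((\<lambda>\<epsilon>. expmech_Z r n \<epsilon> i \<omega>) \<longlongrightarrow> maxscore_Z r n i \<omega>) at_top"
  using expmech_prob_tendsto_at_top[OF _ assms, of "\<lambda>j. score r j \<omega>"]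
  unfolding expmech_Z_eq_expmech_prob maxscore_Z_def Let_def by simp

locale fairness_model =
  fixes F :: "('x \<times> bool \<times> bool) measure" and r :: "'x \<Rightarrow> real" and n i :: nat
  assumes prob_space_F: "prob_space F"
    and score_measurable: "(\<lambda>t. r (fst t)) \<in> borel_measurable F"
    and qualified_sets: "\<And>b. {t \<in> space F. fst (snd t) = b \<and> snd (snd t)} \<in> sets F"
    and qualified_pos: "\<And>b. measure F {t \<in> space F. fst (snd t) = b \<and> snd (snd t)} > 0"
    and score_range: "\<And>x. r x \<in> {0..1}"
    and index: "i \<in> {1..n}"
begin

abbreviation M where "M \<equiv> population F n"

abbreviation qualified_group :: "bool \<Rightarrow> ('x \<times> bool \<times> bool) set" where
  "qualified_group b \<equiv> {t \<in> space F. fst (snd t) = b \<and> snd (snd t)}"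

sublocale F: prob_space F
  by (rule prob_space_F)

sublocale product_prob_space "\<lambda>_. F" "{1..n}" ..

sublocale pop: prob_space M
  unfolding population_def by (rule prob_space_PiM) (rule prob_space_F)

lemma group_event_eq: "group_event M i b = {\<omega> \<in> space M. \<omega> i \<in> qualified_group b}"
  using index unfolding group_event_def population_def by (auto simp: space_PiM)

lemma sets_group_event: "group_event M i b \<in> sets M"
  unfolding group_event_eq unfolding population_def using index qualified_sets by simp

lemma measure_group_event: "measure M (group_event M i b) = measure F (qualified_group b)"
  unfolding group_event_eq unfolding population_def using index qualified_sets
  by (rule measure_PiM_Collect_single)

lemma measurable_score:
  assumes "j \<in> {1..n}"
  shows "score r j \<in> borel_measurable M"
  using measurable_compose[OF measurable_component_singleton[OF assms] score_measurable]
  unfolding score_def[abs_def] population_def by simp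

lemma abs_score_le: "\<bar>score r j \<omega>\<bar> \<le> 1"
  using score_range[of "fst (\<omega> j)"] unfolding score_def by simp

lemma measurable_expmech_Z: "expmech_Z r n \<epsilon> i \<in> borel_measurable M"
  unfolding expmech_Z_def using measurable_score
  by (intro borel_measurable_divide borel_measurable_sum borel_measurable_exp borel_measurable_times
      borel_measurable_const) (use index in auto)

lemma measurable_maxscore_Z: "maxscore_Z r n i \<in> borel_measurable M"
proof (rule borel_measurable_LIMSEQ_real)
  show "(\<lambda>m. expmech_Z r n (real m) i \<omega>) \<longlonglongrightarrow> maxscore_Z r n i \<omega>" for \<omega>
    by (rule filterlim_compose[OF expmech_Z_tendsto_maxscore_Z[OF index] filterlim_real_sequentially])
qed (rule measurable_expmech_Z)

lemma cexp_event_score_other: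
  assumes "j \<in> {1..n}" "j \<noteq> i"
  shows "cexp_event M (score r j) (group_event M i b) = (\<integral>t. r (fst t) \<partial>F)"
proof -
  have "(\<integral>\<omega>. indicator (group_event M i b) \<omega> * score r j \<omega> \<partial>M)
      = (\<integral>\<omega>. indicator (qualified_group b) (\<omega> i) * r (fst (\<omega> j)) \<partial>M)"
    using index unfolding group_event_eq score_def unfolding population_def
    by (intro Bochner_Integration.integral_cong) (auto simp: indicator_def space_PiM)
  also have "\<dots> = measure F (qualified_group b) * (\<integral>t. r (fst t) \<partial>F)"
  proof -
    have "integrable F (\<lambda>t. r (fst t))"
      using score_range by (intro F.integrable_const_bound[where B = 1] AE_I2 score_measurable) auto
    then show ?thesis
      unfolding population_def using assms index qualified_sets
      by (subst integral_PiM_two_components) (auto simp: less_top[symmetric])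
  qed
  finally show ?thesis
    using qualified_pos[of b] unfolding cexp_event_def measure_group_event by simp
qed

definition gap :: "((nat \<Rightarrow> 'x \<times> bool \<times> bool) \<Rightarrow> real) \<Rightarrow> real" where
  "gap W = cexp_event M W (group_event M i False) - cexp_event M W (group_event M i True)"

lemma fairness_gap_eq_gap: "fairness_gap F r n i \<epsilon> = gap (expmech_Z r n \<epsilon> i)"
  unfolding fairness_gap_def gap_def Let_def ..

lemma gap_const: "gap (\<lambda>_. c) = 0"
proof -
  have "cexp_event M (\<lambda>_. c) (group_event M i b) = c" for b
    using sets_group_event qualified_pos[of b]
    by (intro pop.cexp_event_const) (auto simp: measure_group_event)
  then show ?thesis unfolding gap_def by simp
qed

lemma gap_cdiv: "gap (\<lambda>\<omega>. W \<omega> / c) = gap W / c"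
  unfolding gap_def by (simp add: cexp_event_cdiv diff_divide_distrib)

lemma gap_diff: "integrable M W \<Longrightarrow> integrable M V \<Longrightarrow> gap (\<lambda>\<omega>. W \<omega> - V \<omega>) = gap W - gap V"
  unfolding gap_def using sets_group_event by (simp add: cexp_event_diff)

lemma gap_sum:
  "(\<And>k. k \<in> K \<Longrightarrow> integrable M (W k)) \<Longrightarrow> gap (\<lambda>\<omega>. \<Sum>k\<in>K. W k \<omega>) = (\<Sum>k\<in>K. gap (W k))"
  unfolding gap_def using sets_group_event by (simp add: cexp_event_sum sum_subtractf)

lemma abs_gap_le:
  assumes "W \<in> borel_measurable M" "\<And>\<omega>. \<omega> \<in> space M \<Longrightarrow> \<bar>W \<omega>\<bar> \<le> C"
  shows "\<bar>gap W\<bar> \<le> 2 * C"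
proof -
  have "\<bar>cexp_event M W (group_event M i b)\<bar> \<le> C" for b
    using assms sets_group_event qualified_pos
    by (intro pop.abs_cexp_event_le) (auto simp: measure_group_event)
  from this[of False] this[of True] show ?thesis
    unfolding gap_def by linarith
qed

lemma gap_tendsto_at_top:
  fixes s :: "real \<Rightarrow> (nat \<Rightarrow> 'x \<times> bool \<times> bool) \<Rightarrow> real"
  assumes "W \<in> borel_measurable M" "\<And>t. s t \<in> borel_measurable M"
    and "\<And>\<omega>. \<omega> \<in> space M \<Longrightarrow> ((\<lambda>t. s t \<omega>) \<longlongrightarrow> W \<omega>) at_top"
    and "\<And>t \<omega>. \<omega> \<in> space M \<Longrightarrow> \<bar>s t \<omega>\<bar> \<le> C"
  shows "((\<lambda>t. gap (s t)) \<longlongrightarrow> gap W) at_top"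
  unfolding gap_def using assms sets_group_event
  by (intro tendsto_diff pop.cexp_event_tendsto_at_top) auto

lemma gap_score_other: "j \<in> {1..n} \<Longrightarrow> j \<noteq> i \<Longrightarrow> gap (score r j) = 0"
  unfolding gap_def by (simp add: cexp_event_score_other)

lemma gap_maxscore_Z_single:
  assumes "n = 1"
  shows "gap (maxscore_Z r n i) = 0"
proof -
  have "maxscore_Z r n i = (\<lambda>_. 1)"
    using index assms by (auto simp: maxscore_Z_def Let_def Collect_conv_if)
  then show ?thesis by (simp add: gap_const)
qed

lemma expmech_Z_range: "expmech_Z r n \<epsilon> i \<omega> \<in> {0..1}"
  using expmech_prob_nonneg expmech_prob_le_one[OF _ index]
  by (simp add: expmech_Z_eq_expmech_prob)

lemma integrable_expmech_Z: "integrable M (expmech_Z r n \<epsilon> i)"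
  using expmech_Z_range by (intro pop.integrable_const_bound[where B = 1] AE_I2 measurable_expmech_Z) auto

lemma integrable_score: "j \<in> {1..n} \<Longrightarrow> integrable M (score r j)"
  by (intro pop.integrable_const_bound[where B = 1] AE_I2 measurable_score) (simp_all add: abs_score_le)

lemma continuous_on_fairness_gap: "continuous_on A (fairness_gap F r n i)"
proof -
  have "\<bar>fairness_gap F r n i \<epsilon> - fairness_gap F r n i \<epsilon>'\<bar> \<le> 1 * \<bar>\<epsilon> - \<epsilon>'\<bar>" for \<epsilon> \<epsilon>'
  proof -
    have "\<bar>expmech_Z r n \<epsilon> i \<omega> - expmech_Z r n \<epsilon>' i \<omega>\<bar> \<le> \<bar>\<epsilon> - \<epsilon>'\<bar> / 2" for \<omega>
      unfolding expmech_Z_eq_expmech_prob using index score_range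
      by (intro expmech_prob_lipschitz) (auto simp: score_def)
    then have "\<bar>gap (\<lambda>\<omega>. expmech_Z r n \<epsilon> i \<omega> - expmech_Z r n \<epsilon>' i \<omega>)\<bar> \<le> 2 * (\<bar>\<epsilon> - \<epsilon>'\<bar> / 2)"
      by (intro abs_gap_le borel_measurable_diff measurable_expmech_Z)
    then show ?thesis
      unfolding fairness_gap_eq_gap by (simp add: gap_diff integrable_expmech_Z)
  qed
  then show ?thesis
    by (intro lipschitz_on_continuous_on[where L = 1] lipschitz_onI) (auto simp: dist_real_def)
qed

lemma fairness_gap_tendsto_at_top:
  "(fairness_gap F r n i \<longlongrightarrow> gap (maxscore_Z r n i)) at_top"
  unfolding fairness_gap_eq_gap[abs_def]
  using expmech_Z_range
  by (intro gap_tendsto_at_top[where C = 1] measurable_maxscore_Z measurable_expmech_Z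
      expmech_Z_tendsto_maxscore_Z index) auto

lemma gap_centered_score:
  "gap (\<lambda>\<omega>. (score r i \<omega> - (\<Sum>j\<in>{1..n}. score r j \<omega>) / real n) / (2 * real n))
     = (1 - 1 / real n) / (2 * real n) * gap (score r i)"
proof -
  have integrable_sum: "integrable M (\<lambda>\<omega>. (\<Sum>j\<in>{1..n}. score r j \<omega>) / real n)"
    using integrable_score by (intro Bochner_Integration.integrable_divide integrable_sum) auto
  have "gap (\<lambda>\<omega>. \<Sum>j\<in>{1..n}. score r j \<omega>) = (\<Sum>j\<in>{1..n}. gap (score r j))"
    by (intro gap_sum integrable_score)
  also have "\<dots> = gap (score r i)"
    using index by (simp add: sum.remove gap_score_other)
  finally have "gap (\<lambda>\<omega>. \<Sum>j\<in>{1..n}. score r j \<omega>) = gap (score r i)" .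
  then show ?thesis
    using index by (simp only: gap_cdiv gap_diff[OF integrable_score[OF index] integrable_sum])
      (simp add: field_simps)
qed

lemma fairness_gap_slope_at_zero:
  "((\<lambda>\<epsilon>. fairness_gap F r n i \<epsilon> / \<epsilon>) \<longlongrightarrow> (1 - 1 / real n) / (2 * real n) * gap (score r i)) (at_right 0)"
proof -
  define D where "D \<epsilon> \<omega> = (expmech_Z r n \<epsilon> i \<omega> - 1 / real n) / \<epsilon>" for \<epsilon> \<omega>
  define c where "c \<omega> = (score r i \<omega> - (\<Sum>j\<in>{1..n}. score r j \<omega>) / real n) / (2 * real n)" for \<omega>
  \<comment> \<open>also at \<open>\<epsilon> = 0\<close>, where both sides are \<open>0\<close> by division by zero\<close>
  have quotient: "fairness_gap F r n i \<epsilon> / \<epsilon> = gap (D \<epsilon>)" for \<epsilon>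
    unfolding D_def fairness_gap_eq_gap
    by (simp add: gap_cdiv gap_diff gap_const integrable_expmech_Z)
  have D_tendsto: "((\<lambda>\<epsilon>. D \<epsilon> \<omega>) \<longlongrightarrow> c \<omega>) (at_right 0)" for \<omega>
    using expmech_prob_slope_at_zero[OF _ index, of "\<lambda>j. score r j \<omega>"]
    unfolding D_def c_def expmech_Z_eq_expmech_prob
    by (auto intro: tendsto_mono[OF at_le])
  have D_bound: "\<bar>D \<epsilon> \<omega>\<bar> \<le> 1 / 2" for \<epsilon> \<omega>
  proof -
    have "\<bar>expmech_Z r n \<epsilon> i \<omega> - expmech_Z r n 0 i \<omega>\<bar> \<le> \<bar>\<epsilon> - 0\<bar> / 2"
      unfolding expmech_Z_eq_expmech_prob using index score_range
      by (intro expmech_prob_lipschitz) (auto simp: score_def)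
    then show ?thesis
      unfolding D_def by (simp add: expmech_Z_eq_expmech_prob expmech_prob_zero abs_div divide_le_eq)
  qed
  have "((\<lambda>\<epsilon>. gap (D \<epsilon>)) \<longlongrightarrow> gap c) (at_right 0)"
    unfolding filterlim_at_right_to_top
  proof (rule gap_tendsto_at_top[where C = "1 / 2"])
    show "c \<in> borel_measurable M"
      unfolding c_def using measurable_score index by measurable
    show "D (inverse t) \<in> borel_measurable M" for t
      unfolding D_def using measurable_expmech_Z by measurable
    show "((\<lambda>t. D (inverse t) \<omega>) \<longlongrightarrow> c \<omega>) at_top" for \<omega>
      by (rule filterlim_compose[OF D_tendsto filterlim_inverse_at_right_top])
  qed (rule D_bound)
  then show ?thesis
    unfolding quotient c_def gap_centered_score .
qed

end

theorem theorem1: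
  fixes F :: "('x \<times> bool \<times> bool) measure" and r :: "'x \<Rightarrow> real"
    and Rset :: "real set" and n i :: nat and a :: bool
  assumes "prob_space F"
    and "(\<lambda>t. r (fst t)) \<in> borel_measurable F"
    and "\<And>b y. {t \<in> space F. fst (snd t) = b \<and> snd (snd t) = y} \<in> sets F"
    and "finite Rset" and "Rset \<subseteq> {0..1}" and "0 \<in> Rset" and "1 \<in> Rset"
    and "\<And>x. r x \<in> Rset"
    and "\<And>b. measure F {t \<in> space F. fst (snd t) = b \<and> snd (snd t)} > 0"
    and "i \<in> {1..n}"
    and "cexp_event (population F n) (maxscore_Z r n i) (group_event (population F n) i a)
         < cexp_event (population F n) (maxscore_Z r n i) (group_event (population F n) i (\<not> a))"
    and "cexp_event (population F n) (score r i) (group_event (population F n) i a)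
         > cexp_event (population F n) (score r i) (group_event (population F n) i (\<not> a))"
  shows "\<exists>\<epsilon>>0. fairness_gap F r n i \<epsilon> = 0"
proof -
  interpret fairness_model F r n i
  proof (rule fairness_model.intro)
    show "{t \<in> space F. fst (snd t) = b \<and> snd (snd t)} \<in> sets F" for b
      using assms(3)[of b True] by simp
    show "r x \<in> {0..1}" for x
      using assms(5,8) by blast
  qed (fact assms)+
  have opposite: "gap (maxscore_Z r n i) * gap (score r i) < 0"
    using assms(11,12) unfolding gap_def by (cases a) (simp_all add: mult_pos_neg mult_neg_pos)
  then have "n \<noteq> 1"
    using gap_maxscore_Z_single by auto
  then have "n \<ge> 2"
    using index by simp
  then have "(1 - 1 / real n) / (2 * real n) > 0"
    by (simp add: field_simps)
  then have "(1 - 1 / real n) / (2 * real n) * gap (score r i) * gap (maxscore_Z r n i) < 0"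
    using mult_pos_neg[OF _ opposite[unfolded mult.commute[of "gap (maxscore_Z r n i)"]]]
    by (simp only: mult.assoc)
  then show ?thesis
    by (rule pos_root_of_opposite_signs_at_zero_and_infinity[OF continuous_on_fairness_gap
          fairness_gap_slope_at_zero fairness_gap_tendsto_at_top])
qed

end
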